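(* Let $\mathcal{A}$ be an Ershov $\mathcal{C}$-algebra. If $\mathcal{A}$ is weakly equationally Noetherian, then for every set of constants $\{c_j \mid j \in J\} \subseteq \mathcal{C}$ that is not bounded above, there exists $c \in \mathcal{C}$ such that the system of equations in one variable $x$ $$\{ x \wedge c_j = 0 \mid j \in J\}$$ is equivalent over $\mathcal{A}$ to the equation $x \leq c$.
   Context: An Ershov algebra is a structure $\langle A; \vee, \wedge, \setminus, 0\rangle$ such that $\langle A;\vee,\wedge\rangle$ is a distributive lattice with least element $0$, and $b \setminus a$ is the relative complement: the unique $z$ with $z \wedge a = 0$ and $z \vee a = a \vee b$. An Ershov $\mathcal{C}$-algebra is an Ershov algebra $\mathcal{A}$ together with a distinguished subalgebra $\mathcal{C}$ whose elements are added as constant symbols; $\mathcal{L}$ is the language $\{\vee,\wedge,\setminus,0\}$ plus these constants. An equation is $t(\bar x)=s(\bar x)$ with $t,s$ terms of $\mathcal{L}$; $t\le s$ means the equation $t\vee s = s$. Two systems of equations are equivalent over $\mathcal{A}$ if they have the same solution set. $\mathcal{A}$ is weakly equationally Noetherian if every system of equations (possibly infinite) in finitely many variables is equivalent over $\mathcal{A}$ to some finite system of equations of $\mathcal{L}$. A set is upper-unbounded if it has no upper bound in $\mathcal{A}$. *)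

theory Defs
  imports Main
begin

text \<open>An Ershov algebra is modelled on a type of class distrib_lattice with least element
  bot (the constant 0) and an operation minus which is required to be the relative complement.\<close>

definition ershov_algebra :: "'a::{distrib_lattice, order_bot, minus} itself \<Rightarrow> bool" where
  "ershov_algebra _ \<longleftrightarrow>
     (\<forall>a b :: 'a. inf (b - a) a = bot \<and> sup (b - a) a = sup a b)"

definition ershov_subalgebra :: "'a::{distrib_lattice, order_bot, minus} set \<Rightarrow> bool" where
  "ershov_subalgebra C \<longleftrightarrow> bot \<in> C \<and>
     (\<forall>a\<in>C. \<forall>b\<in>C. sup a b \<in> C \<and> inf a b \<in> C \<and> a - b \<in> C)"

datatype 'a trm = Var nat | Cst 'a | Join "'a trm" "'a trm" | Meet "'a trm" "'a trm"
  | Diff "'a trm" "'a trm" | Zero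

primrec eval :: "(nat \<Rightarrow> 'a::{distrib_lattice, order_bot, minus}) \<Rightarrow> 'a trm \<Rightarrow> 'a" where
  "eval v (Var i) = v i"
| "eval v (Cst c) = c"
| "eval v (Join t s) = sup (eval v t) (eval v s)"
| "eval v (Meet t s) = inf (eval v t) (eval v s)"
| "eval v (Diff t s) = eval v t - eval v s"
| "eval v Zero = bot"

primrec vars :: "'a trm \<Rightarrow> nat set" where
  "vars (Var i) = {i}"
| "vars (Cst c) = {}"
| "vars (Join t s) = vars t \<union> vars s"
| "vars (Meet t s) = vars t \<union> vars s"
| "vars (Diff t s) = vars t \<union> vars s"
| "vars Zero = {}"

primrec csts :: "'a trm \<Rightarrow> 'a set" where
  "csts (Var i) = {}"
| "csts (Cst c) = {c}"
| "csts (Join t s) = csts t \<union> csts s"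
| "csts (Meet t s) = csts t \<union> csts s"
| "csts (Diff t s) = csts t \<union> csts s"
| "csts Zero = {}"

type_synonym 'a eqn = "'a trm \<times> 'a trm"

definition system_in :: "'a set \<Rightarrow> nat \<Rightarrow> 'a eqn set \<Rightarrow> bool" where
  "system_in C n S \<longleftrightarrow> (\<forall>(t, s)\<in>S. vars t \<union> vars s \<subseteq> {..<n} \<and> csts t \<union> csts s \<subseteq> C)"

definition sols :: "nat \<Rightarrow> 'a eqn set \<Rightarrow> (nat \<Rightarrow> 'a::{distrib_lattice, order_bot, minus}) set" where
  "sols n S = {v. (\<forall>i\<ge>n. v i = bot) \<and> (\<forall>(t, s)\<in>S. eval v t = eval v s)}"

definition equivalent :: "nat \<Rightarrow> ('a::{distrib_lattice, order_bot, minus}) eqn set \<Rightarrow> 'a eqn set \<Rightarrow> bool" where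
  "equivalent n S T \<longleftrightarrow> sols n S = sols n T"

definition weakly_eq_noetherian :: "'a::{distrib_lattice, order_bot, minus} set \<Rightarrow> bool" where
  "weakly_eq_noetherian C \<longleftrightarrow>
     (\<forall>n (S :: 'a eqn set). system_in C n S \<longrightarrow>
        (\<exists>S0. finite S0 \<and> system_in C n S0 \<and> equivalent n S S0))"

definition upper_unbounded :: "'a::order set \<Rightarrow> bool" where
  "upper_unbounded X \<longleftrightarrow> \<not> (\<exists>u. \<forall>x\<in>X. x \<le> u)"

end

theory Submission
  imports Defs
begin

text \<open>Fix one variable x and an element u above all constants in play. The elements
  x \<sqinter> u, u - x and x - u are pairwise disjoint with join x \<squnion> u, and every term function
  of x acts on these three pieces separately: on the first as meet with a constant a, on the
  second as meet with a constant b, on the third as identity or zero. Since t = s iff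
  (t - s) \<squnion> (s - t) = 0, every finite system therefore has a solution set of the form
  {x. x \<sqinter> p = 0, q \<le> x, and possibly x \<le> u}. By weak Noetherianity the system
  {x \<sqinter> c_j = 0} is equivalent to such a finite system. Then 0 is a solution, so q = 0; and the bound x \<le> u must be present, since
  otherwise every c_j - p would be a solution, giving c_j \<le> p for all j. So the solutions are
  exactly the x \<le> u - p.\<close>

lemma ershov_subalgebra_bot: "ershov_subalgebra C \<Longrightarrow> bot \<in> C"
  unfolding ershov_subalgebra_def by auto

lemma ershov_subalgebra_closed:
  assumes "ershov_subalgebra C" "a \<in> C" "b \<in> C"
  shows "sup a b \<in> C" "inf a b \<in> C" "a - b \<in> C"
  using assms unfolding ershov_subalgebra_def by auto

lemma ershov_subalgebra_finite_upper_bound: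
  fixes A :: "'a::{distrib_lattice, order_bot, minus} set"
  assumes C: "ershov_subalgebra C" and "finite A" "A \<subseteq> C"
  shows "\<exists>u\<in>C. \<forall>a\<in>A. a \<le> u"
  using \<open>finite A\<close> \<open>A \<subseteq> C\<close>
proof (induction A rule: finite_induct)
  case empty
  then show ?case using ershov_subalgebra_bot[OF C] by blast
next
  case (insert a A)
  then obtain u where "u \<in> C" "\<forall>a\<in>A. a \<le> u" by auto
  with insert.prems C show ?case
    by (intro bexI[of _ "sup a u"]) (auto intro: le_supI2 simp: ershov_subalgebra_def)
qed

lemma finite_csts: "finite (csts t)"
  by (induction t) auto

definition unary_valuation :: "'a \<Rightarrow> nat \<Rightarrow> 'a::bot" where
  "unary_valuation x i = (if i = 0 then x else bot)"

definition unary_sols :: "('a::{distrib_lattice, order_bot, minus}) eqn set \<Rightarrow> 'a set" where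
  "unary_sols S = {x. \<forall>(t, s)\<in>S. eval (unary_valuation x) t = eval (unary_valuation x) s}"

lemma sols_1_eq_image_unary_sols: "sols 1 S = unary_valuation ` unary_sols S"
proof (intro equalityI subsetI)
  fix v :: "nat \<Rightarrow> 'a"
  assume v: "v \<in> sols 1 S"
  then have "v = unary_valuation (v 0)"
    by (auto simp: sols_def unary_valuation_def)
  moreover have "v 0 \<in> unary_sols S"
    using v \<open>v = unary_valuation (v 0)\<close> unfolding sols_def unary_sols_def by simp
  ultimately show "v \<in> unary_valuation ` unary_sols S" by (rule image_eqI)
qed (auto simp: sols_def unary_sols_def unary_valuation_def)

lemma equivalent_1_iff: "equivalent 1 S T \<longleftrightarrow> unary_sols S = unary_sols T"
proof -
  have "inj unary_valuation"
    by (rule injI) (metis unary_valuation_def)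
  then show ?thesis
    unfolding equivalent_def sols_1_eq_image_unary_sols by (rule inj_image_eq_iff)
qed

lemma unary_sols_disjointness:
  "unary_sols {(Meet (Var 0) (Cst k), Zero) | k. k \<in> K} = {x. \<forall>k\<in>K. inf x k = bot}"
proof -
  have T: "{(Meet (Var 0) (Cst k), Zero) | k. k \<in> K} = (\<lambda>k. (Meet (Var 0) (Cst k), Zero)) ` K"
    by blast
  show ?thesis unfolding T unary_sols_def by (simp add: unary_valuation_def)
qed

lemma unary_sols_le: "unary_sols {(Join (Var 0) (Cst c), Cst c)} = {x. x \<le> c}"
  by (auto simp: unary_sols_def unary_valuation_def le_iff_sup)

locale ershov =
  assumes inf_diff_self: "inf (b - a) a = (bot::'a::{distrib_lattice, order_bot, minus})"
    and sup_diff_self: "sup (b - a) a = sup a (b::'a)"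
begin

sublocale lattice_bot: bounded_lattice_bot inf "(\<le>) :: 'a \<Rightarrow> 'a \<Rightarrow> bool" "(<)" sup bot
  by unfold_locales

declare inf_diff_self [simp]

lemma inf_self_diff [simp]: "inf a (b - a) = (bot::'a)"
  using inf_diff_self by (simp add: inf_commute)

lemma sup_self_diff [simp]: "sup a (b - a) = sup a (b::'a)"
  using sup_diff_self by (simp add: sup_commute)

lemma diff_unique:
  fixes z a b :: 'a
  assumes "inf z a = bot" "sup z a = sup a b"
  shows "b - a = z"
proof -
  have "z = inf z (sup z a)" by simp
  also have "\<dots> = inf z (sup (b - a) a)"
    using assms(2) by (simp add: sup_diff_self)
  also have "\<dots> = inf z (b - a)"
    using assms(1) by (simp add: inf_sup_distrib1)
  finally have "z \<le> b - a" by (metis inf.cobounded2)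
  have "b - a = inf (b - a) (sup (b - a) a)" by simp
  also have "\<dots> = inf (b - a) (sup z a)"
    using assms(2) by (simp add: sup_diff_self)
  also have "\<dots> = inf (b - a) z"
    by (simp add: inf_sup_distrib1 inf_diff_self)
  finally show ?thesis using \<open>z \<le> b - a\<close> by (metis antisym inf.cobounded2)
qed

lemma diff_le [simp]: "b - a \<le> (b::'a)"
proof -
  have "b - a = inf (b - a) (sup (b - a) a)" by simp
  also have "\<dots> = inf (b - a) b"
    by (simp add: sup_diff_self inf_sup_distrib1 inf_diff_self)
  finally show ?thesis by (metis inf.cobounded2)
qed

lemma diff_eq_bot_iff: "b - a = bot \<longleftrightarrow> b \<le> (a::'a)"
proof
  assume "b - a = bot"
  then show "b \<le> a" using sup_diff_self[of b a] by (simp add: sup.absorb_iff1)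
next
  assume "b \<le> a"
  then show "b - a = bot" by (intro diff_unique) (simp_all add: sup.absorb1)
qed

lemma diff_disjoint: "inf b a = bot \<Longrightarrow> b - a = (b::'a)"
  by (rule diff_unique) (simp_all add: sup_commute)

lemma diff_bot [simp]: "b - bot = (b::'a)"
  by (simp add: diff_disjoint)

lemma bot_diff [simp]: "bot - a = (bot::'a)"
  by (simp add: diff_eq_bot_iff)

lemma diff_self [simp]: "a - a = (bot::'a)"
  by (simp add: diff_eq_bot_iff)

lemma le_diff_iff: "y \<le> b - a \<longleftrightarrow> y \<le> b \<and> inf y (a::'a) = bot"
proof
  assume "y \<le> b - a"
  moreover have "inf (b - a) a = bot" by (rule inf_diff_self)
  ultimately show "y \<le> b \<and> inf y a = bot"
    using diff_le by (metis bot.extremum_unique inf_mono order_refl order_trans)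
next
  assume y: "y \<le> b \<and> inf y a = bot"
  then have "y = inf y (sup (b - a) a)" by (simp add: sup_diff_self le_supI2 inf.absorb1)
  also have "\<dots> = inf y (b - a)" using y by (simp add: inf_sup_distrib1)
  finally show "y \<le> b - a" by (metis inf.cobounded2)
qed

lemma sup_diff_distrib: "sup b c - a = sup (b - a) (c - (a::'a))"
proof (rule diff_unique)
  show "inf (sup (b - a) (c - a)) a = bot"
    by (simp add: inf_sup_distrib2 inf_diff_self)
  have "sup (sup (b - a) (c - a)) a = sup (sup (b - a) a) (sup (c - a) a)"
    by (simp add: sup_assoc sup_left_commute)
  then show "sup (sup (b - a) (c - a)) a = sup a (sup b c)"
    by (simp add: sup_diff_self sup_assoc sup_left_commute)
qed

lemma inf_diff_assoc: "inf b (c - a) = inf b c - (a::'a)"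
proof (rule diff_unique[symmetric])
  show "inf (inf b (c - a)) a = bot"
    by (simp add: inf_assoc inf_diff_self)
  have "sup (inf b (c - a)) a = inf (sup b a) (sup (c - a) a)"
    by (rule sup_inf_distrib2)
  also have "\<dots> = sup a (inf b c)"
    by (simp add: sup_diff_self sup_inf_distrib1 sup_commute)
  finally show "sup (inf b (c - a)) a = sup a (inf b c)" .
qed

lemma inf_diff_inf: "inf w a - inf w b = inf w (a - (b::'a))"
proof (rule diff_unique)
  show "inf (inf w (a - b)) (inf w b) = bot"
    by (simp add: inf_assoc inf_left_commute[of "a - b"] inf_diff_self)
  have "sup (inf w (a - b)) (inf w b) = inf w (sup (a - b) b)"
    by (rule inf_sup_distrib1[symmetric])
  then show "sup (inf w (a - b)) (inf w b) = sup (inf w b) (inf w a)"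
    by (simp add: sup_diff_self inf_sup_distrib1)
qed

lemma diff_sup_eq_diff_diff: "b - sup a c = (b - a) - (c::'a)"
proof (rule diff_unique)
  have "inf ((b - a) - c) a \<le> inf (b - a) a"
    using diff_le by (rule inf_mono) simp
  then show "inf ((b - a) - c) (sup a c) = bot"
    by (simp add: inf_sup_distrib1 inf_diff_self bot_unique)
  have "sup ((b - a) - c) (sup a c) = sup a (sup c ((b - a) - c))"
    by (simp only: ac_simps)
  also have "\<dots> = sup a (sup c (b - a))"
    by (simp only: sup_self_diff)
  also have "\<dots> = sup c (sup a (b - a))"
    by (simp only: ac_simps)
  also have "\<dots> = sup (sup a c) b"
    by (simp add: ac_simps)
  finally show "sup ((b - a) - c) (sup a c) = sup (sup a c) b" .
qed

lemma inf_sup_diff_split: "sup (inf x u) (x - u) = (x::'a)"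
proof -
  have "x = inf x (sup (x - u) u)" by (simp add: sup_diff_self inf.absorb1)
  also have "\<dots> = sup (x - u) (inf x u)"
    by (simp add: inf_sup_distrib1 diff_le inf.absorb2)
  finally show ?thesis by (simp add: sup_commute)
qed

lemma disjoint_mono: "X \<le> A \<Longrightarrow> Y \<le> B \<Longrightarrow> inf A B = bot \<Longrightarrow> inf X Y = (bot::'a)"
  by (metis bot_unique inf_mono)

lemma inf_sup_cross_disjoint:
  assumes "inf X1 Y2 = bot" "inf Y1 X2 = (bot::'a)"
  shows "inf (sup X1 Y1) (sup X2 Y2) = sup (inf X1 X2) (inf Y1 Y2)"
  using assms by (simp add: inf_sup_distrib1 inf_sup_distrib2 sup_commute)

lemma diff_sup_cross_disjoint:
  assumes "inf X1 Y2 = bot" "inf Y1 X2 = (bot::'a)"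
  shows "sup X1 Y1 - sup X2 Y2 = sup (X1 - X2) (Y1 - Y2)"
proof -
  have "X1 - sup X2 Y2 = X1 - X2"
    unfolding diff_sup_eq_diff_diff
    by (rule diff_disjoint, rule disjoint_mono[OF diff_le order_refl assms(1)])
  moreover have "Y1 - sup X2 Y2 = Y1 - Y2"
    unfolding sup_commute[of X2] diff_sup_eq_diff_diff
    by (rule diff_disjoint, rule disjoint_mono[OF diff_le order_refl assms(2)])
  ultimately show ?thesis by (simp add: sup_diff_distrib)
qed

lemma disjoint_slots_slotwise:
  fixes X X' Y Y' Z Z' :: 'a
  assumes "inf \<alpha> \<beta> = bot" "inf \<alpha> \<gamma> = bot" "inf \<beta> \<gamma> = bot"
    and "X \<le> \<alpha>" "X' \<le> \<alpha>" "Y \<le> \<beta>" "Y' \<le> \<beta>" "Z \<le> \<gamma>" "Z' \<le> \<gamma>"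
  shows "inf (sup X (sup Y Z)) (sup X' (sup Y' Z')) = sup (inf X X') (sup (inf Y Y') (inf Z Z'))"
    and "sup X (sup Y Z) - sup X' (sup Y' Z') = sup (X - X') (sup (Y - Y') (Z - Z'))"
proof -
  have "inf \<alpha> (sup \<beta> \<gamma>) = bot" "inf (sup \<beta> \<gamma>) \<alpha> = bot"
    using assms(1,2) by (simp_all add: inf_sup_distrib1 inf_sup_distrib2 inf_commute)
  moreover have "sup Y Z \<le> sup \<beta> \<gamma>" "sup Y' Z' \<le> sup \<beta> \<gamma>"
    using assms(6-9) by (simp_all add: sup.coboundedI1 sup.coboundedI2)
  ultimately have outer: "inf X (sup Y' Z') = bot" "inf (sup Y Z) X' = bot"
    using assms(4,5) by (simp_all add: disjoint_mono)
  have inner: "inf Y Z' = bot" "inf Z Y' = bot"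
    using assms(3,6-9) disjoint_mono[of Z \<gamma> Y' \<beta>] by (simp_all add: disjoint_mono inf_commute)
  show "inf (sup X (sup Y Z)) (sup X' (sup Y' Z')) = sup (inf X X') (sup (inf Y Y') (inf Z Z'))"
    by (simp only: inf_sup_cross_disjoint[OF outer] inf_sup_cross_disjoint[OF inner])
  show "sup X (sup Y Z) - sup X' (sup Y' Z') = sup (X - X') (sup (Y - Y') (Z - Z'))"
    by (simp only: diff_sup_cross_disjoint[OF outer] diff_sup_cross_disjoint[OF inner])
qed

lemma eq_iff_sup_diff_eq_bot: "a = b \<longleftrightarrow> sup (a - b) (b - a) = (bot::'a)"
  by (auto simp: diff_eq_bot_iff intro: antisym)

end

definition unary_nf :: "'a \<Rightarrow> 'a \<Rightarrow> 'a \<Rightarrow> bool \<Rightarrow> 'a \<Rightarrow> 'a::{lattice, bot, minus}" where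
  "unary_nf u a b e x = sup (inf (inf x u) a) (sup (inf (u - x) b) (if e then x - u else bot))"

definition has_unary_nf :: "'a::{distrib_lattice, order_bot, minus} set \<Rightarrow> 'a \<Rightarrow> 'a trm \<Rightarrow> bool" where
  "has_unary_nf C u t \<longleftrightarrow>
    (\<exists>a\<in>C. \<exists>b\<in>C. \<exists>e. \<forall>x. eval (unary_valuation x) t = unary_nf u a b e x)"

context ershov
begin

lemma unary_nf_slots_disjoint:
  "inf (inf x u) (u - x) = bot" "inf (inf x u) (x - u) = bot" "inf (u - x) (x - (u::'a)) = bot"
proof -
  show "inf (inf x u) (u - x) = bot" by (simp add: inf_assoc inf.absorb2)
  show "inf (inf x u) (x - u) = bot" by (simp add: inf_assoc inf.absorb2 inf_left_commute[of u])
  show "inf (u - x) (x - u) = bot"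
    by (rule disjoint_mono[OF diff_le order_refl]) (simp add: inf_commute)
qed

lemmas unary_nf_slotwise = disjoint_slots_slotwise[OF unary_nf_slots_disjoint]

lemma unary_nf_sup:
  "sup (unary_nf u a b e x) (unary_nf u a' b' e' x) = unary_nf u (sup a a') (sup b b') (e \<or> e') (x::'a)"
  unfolding unary_nf_def by (simp add: inf_sup_distrib1 ac_simps)

lemma unary_nf_inf:
  "inf (unary_nf u a b e x) (unary_nf u a' b' e' x) = unary_nf u (inf a a') (inf b b') (e \<and> e') (x::'a)"
  unfolding unary_nf_def
  by (subst unary_nf_slotwise(1)[where x = x and u = u])
    (simp_all add: inf_assoc inf_left_commute le_infI2)

lemma unary_nf_diff:
  "unary_nf u a b e x - unary_nf u a' b' e' x = unary_nf u (a - a') (b - b') (e \<and> \<not> e') (x::'a)"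
  unfolding unary_nf_def
  by (subst unary_nf_slotwise(2)[where x = x and u = u]) (simp_all add: inf_diff_inf le_infI1)

lemma unary_nf_var: "unary_nf u u bot True x = (x::'a)"
  by (simp add: unary_nf_def inf_assoc inf_sup_diff_split)

lemma unary_nf_const: "c \<le> u \<Longrightarrow> unary_nf u c c False x = (c::'a)"
proof -
  assume "c \<le> u"
  then have "inf c u = c" by (rule inf.absorb1)
  then have "inf (inf x u) c = inf c x" and "inf (u - x) c = c - x"
    by (metis inf_assoc inf_commute, metis inf_commute inf_diff_assoc)
  then show ?thesis by (simp add: unary_nf_def inf_sup_diff_split)
qed

lemma unary_nf_bot: "unary_nf u bot bot False x = (bot::'a)"
  by (simp add: unary_nf_def)

lemma has_unary_nf_Join_Meet_Diff:
  assumes C: "ershov_subalgebra C" and "has_unary_nf C u t" "has_unary_nf C u s"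
  shows "has_unary_nf C u (Join t s)" "has_unary_nf C u (Meet t s)"
    and "has_unary_nf C u (Diff t (s::'a trm))"
proof -
  obtain a b e a' b' e' where "a \<in> C" "b \<in> C" "a' \<in> C" "b' \<in> C"
    "\<And>x. eval (unary_valuation x) t = unary_nf u a b e x"
    "\<And>x. eval (unary_valuation x) s = unary_nf u a' b' e' x"
    using assms(2,3) unfolding has_unary_nf_def by metis
  then show "has_unary_nf C u (Join t s)" "has_unary_nf C u (Meet t s)" "has_unary_nf C u (Diff t s)"
    unfolding has_unary_nf_def
    by (auto simp: unary_nf_sup unary_nf_inf unary_nf_diff intro!: ershov_subalgebra_closed[OF C])
qed

lemma has_unary_nf_if_csts_le:
  assumes C: "ershov_subalgebra C" and "u \<in> C"
  shows "csts t \<subseteq> C \<inter> {..u} \<Longrightarrow> has_unary_nf C u (t::'a trm)"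
proof (induction t)
  case (Var i)
  show ?case
  proof (cases "i = 0")
    case True
    then show ?thesis using C \<open>u \<in> C\<close> unfolding has_unary_nf_def
      by (intro bexI[of _ u] bexI[of _ bot] exI[of _ True])
        (auto simp: unary_valuation_def unary_nf_var ershov_subalgebra_bot)
  next
    case False
    then show ?thesis using C unfolding has_unary_nf_def
      by (intro bexI[of _ bot] exI[of _ False])
        (auto simp: unary_valuation_def unary_nf_bot ershov_subalgebra_bot)
  qed
next
  case (Cst c)
  then show ?case unfolding has_unary_nf_def
    by (intro bexI[of _ c] exI[of _ False]) (auto simp: unary_nf_const)
next
  case Zero
  show ?case using C unfolding has_unary_nf_def
    by (intro bexI[of _ bot] exI[of _ False]) (auto simp: unary_nf_bot ershov_subalgebra_bot)
qed (use C has_unary_nf_Join_Meet_Diff in auto)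

end

definition constraint_set :: "'a \<Rightarrow> 'a \<Rightarrow> 'a \<Rightarrow> bool \<Rightarrow> 'a::{lattice, bot} set" where
  "constraint_set u p q e = {x. inf x p = bot \<and> q \<le> x \<and> (e \<longrightarrow> x \<le> u)}"

context ershov
begin

lemma unary_nf_eq_bot_iff:
  "unary_nf u a b e x = bot \<longleftrightarrow> (x::'a) \<in> constraint_set u (inf u a) (inf u b) e"
proof -
  have "inf (u - x) b = inf b u - x" by (simp add: inf_commute inf_diff_assoc)
  then show ?thesis
    by (simp add: unary_nf_def constraint_set_def inf_assoc diff_eq_bot_iff inf_commute[of u])
qed

lemma constraint_set_Int:
  "constraint_set u p q e \<inter> constraint_set u p' q' e'
    = constraint_set u (sup p p') (sup q q') (e \<or> e')" for u :: 'a
  by (auto simp: constraint_set_def inf_sup_distrib1)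

lemma unary_sols_eq_constraint_set:
  fixes S :: "'a eqn set"
  assumes C: "ershov_subalgebra C" and "u \<in> C"
  shows "finite S \<Longrightarrow> \<forall>(t, s)\<in>S. csts t \<union> csts s \<subseteq> C \<inter> {..u} \<Longrightarrow>
    \<exists>p\<in>C. \<exists>q\<in>C. \<exists>e. unary_sols S = constraint_set u p q e"
proof (induction S rule: finite_induct)
  case empty
  have "unary_sols {} = constraint_set u bot bot False"
    by (simp add: unary_sols_def constraint_set_def)
  then show ?case using ershov_subalgebra_bot[OF C] by blast
next
  case (insert eqn S)
  obtain t s where eqn: "eqn = (t, s)" by fastforce
  then have "has_unary_nf C u (Join (Diff t s) (Diff s t))"
    using insert.prems by (intro has_unary_nf_if_csts_le[OF C \<open>u \<in> C\<close>]) auto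
  then obtain a b e where "a \<in> C" "b \<in> C"
    and nf: "\<And>x. eval (unary_valuation x) (Join (Diff t s) (Diff s t)) = unary_nf u a b e x"
    unfolding has_unary_nf_def by metis
  have "x \<in> unary_sols {eqn} \<longleftrightarrow> unary_nf u a b e x = bot" for x
    using eq_iff_sup_diff_eq_bot[of "eval (unary_valuation x) t" "eval (unary_valuation x) s"]
    by (simp add: unary_sols_def eqn flip: nf)
  then have "unary_sols {eqn} = constraint_set u (inf u a) (inf u b) e"
    by (auto simp: unary_nf_eq_bot_iff)
  moreover obtain p q e' where "p \<in> C" "q \<in> C" "unary_sols S = constraint_set u p q e'"
    using insert by auto
  moreover have "unary_sols (insert eqn S) = unary_sols {eqn} \<inter> unary_sols S"
    by (auto simp: unary_sols_def)
  ultimately show ?case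
    using C \<open>u \<in> C\<close> \<open>a \<in> C\<close> \<open>b \<in> C\<close>
    by (auto simp: constraint_set_Int intro!: ershov_subalgebra_closed)
qed

lemma unary_sols_finite_system:
  fixes S :: "'a eqn set"
  assumes C: "ershov_subalgebra C" and "finite S" "system_in C n S"
  shows "\<exists>u\<in>C. \<exists>p\<in>C. \<exists>q\<in>C. \<exists>e. unary_sols S = constraint_set u p q e"
proof -
  define A where "A = (\<Union>(t, s)\<in>S. csts t \<union> csts s)"
  have "finite A" "A \<subseteq> C"
    using assms(2,3) by (auto simp: A_def finite_csts system_in_def)
  then obtain u where "u \<in> C" "\<forall>a\<in>A. a \<le> u"
    using ershov_subalgebra_finite_upper_bound[OF C] by blast
  then have "\<forall>(t, s)\<in>S. csts t \<union> csts s \<subseteq> C \<inter> {..u}"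
    using \<open>A \<subseteq> C\<close> unfolding A_def by fastforce
  then show ?thesis
    using unary_sols_eq_constraint_set[OF C \<open>u \<in> C\<close> \<open>finite S\<close>] \<open>u \<in> C\<close> by blast
qed

lemma annihilator_eq_constraint_set_imp_principal:
  assumes "upper_unbounded K" and ann: "{x. \<forall>k\<in>K. inf x k = bot} = constraint_set u p q e"
  shows "{x. \<forall>k\<in>K. inf x k = bot} = {x. x \<le> u - (p::'a)}"
proof -
  have "bot \<in> constraint_set u p q e" unfolding ann[symmetric] by simp
  then have "q = bot" by (simp add: constraint_set_def bot_unique)
  have e
  proof (rule ccontr)
    assume "\<not> e"
    then have ann_p: "{x. \<forall>k\<in>K. inf x k = bot} = {x. inf x p = bot}"
      using ann \<open>q = bot\<close> by (simp add: constraint_set_def)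
    have "k \<le> p" if "k \<in> K" for k
    proof -
      have "k - p \<in> {x. \<forall>k\<in>K. inf x k = bot}" unfolding ann_p by simp
      then have "inf (k - p) k = bot" using \<open>k \<in> K\<close> by blast
      then show ?thesis by (simp add: inf.absorb1 diff_eq_bot_iff)
    qed
    then show False using assms(1) unfolding upper_unbounded_def by blast
  qed
  then show ?thesis
    using ann \<open>q = bot\<close> by (simp add: constraint_set_def le_diff_iff conj_commute)
qed

end

theorem mainTheorem6:
  fixes C :: "'a::{distrib_lattice, order_bot, minus} set"
    and K :: "'a set"
  assumes "ershov_algebra TYPE('a)"
    and "ershov_subalgebra C"
    and "weakly_eq_noetherian C"
    and "K \<subseteq> C"
    and "upper_unbounded K"
  shows "\<exists>c\<in>C. equivalent 1 {(Meet (Var 0) (Cst cj), Zero) | cj. cj \<in> K}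
                          {(Join (Var 0) (Cst c), Cst c)}"
proof -
  interpret ershov
    using assms(1) unfolding ershov_algebra_def by unfold_locales auto
  let ?T = "{(Meet (Var 0) (Cst cj), Zero) | cj. cj \<in> K}"
  have "system_in C 1 ?T" using assms(4) unfolding system_in_def by auto
  then obtain S where "finite S" "system_in C 1 S" and "equivalent 1 ?T S"
    using assms(3) unfolding weakly_eq_noetherian_def by blast
  then obtain u p q e where "u \<in> C" "p \<in> C" "unary_sols S = constraint_set u p q e"
    using unary_sols_finite_system[OF assms(2)] by blast
  with \<open>equivalent 1 ?T S\<close> have "{x. \<forall>k\<in>K. inf x k = bot} = constraint_set u p q e"
    by (simp only: equivalent_1_iff unary_sols_disjointness)
  then have "unary_sols ?T = unary_sols {(Join (Var 0) (Cst (u - p)), Cst (u - p))}"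
    unfolding unary_sols_disjointness unary_sols_le
    by (rule annihilator_eq_constraint_set_imp_principal[OF assms(5)])
  then show ?thesis
    using ershov_subalgebra_closed(3)[OF assms(2) \<open>u \<in> C\<close> \<open>p \<in> C\<close>]
    unfolding equivalent_1_iff by blast
qed

end
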